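(* In any execution of the Weakener algorithm (described in the context), for every round $j \ge 0$: if no process reaches the step "write $\textsc{true}$ into $R_2[j]$" in round $j$, then neither $p_0$ nor $p_1$ enters round $j+1$.
   Context: Weakener algorithm for $n \ge 3$ processes $p_0,\dots,p_{n-1}$ in an asynchronous shared-memory system. Shared registers, for each $j = 0,1,2,\dots$: $R_1[j]$, a multi-writer multi-reader register initialized to $\bot$; $C_1[j]$, a register written only by $p_0$, initialized to $-1$; $R_2[j]$, a register initialized to $\textsc{false}$. Code of $p_i$ for $i \in \{0,1\}$: for rounds $j=0,1,2,\dots$: (Phase 1) write $i$ into $R_1[j]$; if $i=0$, flip a fair coin (outcome in $\{0,1\}$) and write the outcome into $C_1[j]$; (Phase 2) read $R_2[j]$ into local variable $v_1$; if $v_1 = \textsc{false}$, exit the for loop. After the loop: return. Code of $p_i$ for $i \in \{2,\dots,n-1\}$: for rounds $j=0,1,2,\dots$: (Phase 1) read $R_1[j]$ into $u_1$; read $R_1[j]$ into $u_2$; read $C_1[j]$ into $c_1$; if $u_1 \ne c_1$ or $u_2 \ne 1-c_1$, exit the for loop; (Phase 2) write $\textsc{true}$ into $R_2[j]$. After the loop: return. Registers behave according to their (linearizable) sequential specification: a read returns the initial value or a value written to that register. *)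

theory Defs
  imports Main
begin

text \<open>Program locations of a process. A location records the next atomic
  step to be executed together with the local variables it needs.\<close>
datatype loc =
    W1 nat                          \<comment> \<open>p0/p1, Phase 1: write own id into R1[j]\<close>
  | Flip nat                        \<comment> \<open>p0: flip a fair coin for round j\<close>
  | WC nat int                      \<comment> \<open>p0: write coin outcome c into C1[j]\<close>
  | RdR2 nat                        \<comment> \<open>p0/p1, Phase 2: read R2[j]\<close>
  | Rd1 nat                         \<comment> \<open>p_i, i>=2: first read of R1[j]\<close>
  | Rd2 nat "int option"            \<comment> \<open>second read of R1[j] (u1 known)\<close>
  | RdC nat "int option" "int option" \<comment> \<open>read C1[j] (u1,u2 known), then test\<close>
  | WrR2 nat                        \<comment> \<open>Phase 2: write TRUE into R2[j]\<close>
  | Done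

fun round_of :: "loc \<Rightarrow> nat option" where
  "round_of (W1 j) = Some j"
| "round_of (Flip j) = Some j"
| "round_of (WC j c) = Some j"
| "round_of (RdR2 j) = Some j"
| "round_of (Rd1 j) = Some j"
| "round_of (Rd2 j u) = Some j"
| "round_of (RdC j u v) = Some j"
| "round_of (WrR2 j) = Some j"
| "round_of Done = None"

text \<open>Global configuration: shared registers and program locations.
  R1 values: None = bottom, Some i = value i.\<close>
record config =
  R1 :: "nat \<Rightarrow> int option"
  C1 :: "nat \<Rightarrow> int"
  R2 :: "nat \<Rightarrow> bool"
  pc :: "nat \<Rightarrow> loc"

definition init :: config where
  "init = \<lparr> R1 = (\<lambda>_. None), C1 = (\<lambda>_. -1), R2 = (\<lambda>_. False),
           pc = (\<lambda>p. if p < 2 then W1 0 else Rd1 0) \<rparr>"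

definition step :: "nat \<Rightarrow> nat \<Rightarrow> config \<Rightarrow> config \<Rightarrow> bool" where
  "step n p s s' \<longleftrightarrow> p < n \<and>
    (case pc s p of
       W1 j \<Rightarrow> s' = s\<lparr> R1 := (R1 s)(j := Some (int p)),
                       pc := (pc s)(p := (if p = 0 then Flip j else RdR2 j)) \<rparr>
     | Flip j \<Rightarrow> (\<exists>c\<in>{0,1}. s' = s\<lparr> pc := (pc s)(p := WC j c) \<rparr>)
     | WC j c \<Rightarrow> s' = s\<lparr> C1 := (C1 s)(j := c), pc := (pc s)(p := RdR2 j) \<rparr>
     | RdR2 j \<Rightarrow> s' = s\<lparr> pc := (pc s)(p := (if R2 s j = False then Done else W1 (Suc j))) \<rparr>
     | Rd1 j \<Rightarrow> s' = s\<lparr> pc := (pc s)(p := Rd2 j (R1 s j)) \<rparr>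
     | Rd2 j u1 \<Rightarrow> s' = s\<lparr> pc := (pc s)(p := RdC j u1 (R1 s j)) \<rparr>
     | RdC j u1 u2 \<Rightarrow>
         (let c1 = C1 s j in
          s' = s\<lparr> pc := (pc s)(p := (if u1 \<noteq> Some c1 \<or> u2 \<noteq> Some (1 - c1)
                                       then Done else WrR2 j)) \<rparr>)
     | WrR2 j \<Rightarrow> s' = s\<lparr> R2 := (R2 s)(j := True), pc := (pc s)(p := Rd1 (Suc j)) \<rparr>
     | Done \<Rightarrow> False)"

text \<open>Stuttering steps are
  allowed so that finite executions (and crashed/never-scheduled processes)
  are represented as well.\<close>
definition execution :: "nat \<Rightarrow> (nat \<Rightarrow> config) \<Rightarrow> bool" where
  "execution n s \<longleftrightarrow> s 0 = init \<and>
     (\<forall>k. s (Suc k) = s k \<or> (\<exists>p. step n p (s k) (s (Suc k))))"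

end

theory Submission
  imports Defs
begin

text \<open>The only step that sets \<open>R2[j]\<close> is a \<open>WrR2 j\<close> step, so under the hypothesis
  \<open>R2[j]\<close> stays \<open>False\<close> forever. Hence \<open>p\<^sub>0\<close> and \<open>p\<^sub>1\<close> never leave the code of rounds
  \<open>\<le> j\<close>: a Phase 2 read of \<open>R2[m]\<close> with \<open>m < j\<close> leads at most to round \<open>m + 1 \<le> j\<close>, and
  the read of \<open>R2[j]\<close> returns \<open>False\<close> and makes the process return.\<close>

fun writer_loc_upto :: "nat \<Rightarrow> loc \<Rightarrow> bool" where
  "writer_loc_upto j (W1 m) = (m \<le> j)"
| "writer_loc_upto j (Flip m) = (m \<le> j)"
| "writer_loc_upto j (WC m c) = (m \<le> j)"
| "writer_loc_upto j (RdR2 m) = (m \<le> j)"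
| "writer_loc_upto j Done = True"
| "writer_loc_upto j _ = False"

definition writers_confined :: "nat \<Rightarrow> config \<Rightarrow> bool" where
  "writers_confined j s \<longleftrightarrow>
     \<not> R2 s j \<and> writer_loc_upto j (pc s 0) \<and> writer_loc_upto j (pc s 1)"

lemma writer_loc_upto_round_of:
  assumes "writer_loc_upto j l" "round_of l = Some m"
  shows "m \<le> j"
  using assms by (cases l) auto

lemma step_process_less:
  assumes "step n p s s'"
  shows "p < n"
  using assms by (simp add: step_def)

lemma step_pc_other:
  assumes "step n q s s'" "p \<noteq> q"
  shows "pc s' p = pc s p"
  using assms by (auto simp: step_def Let_def split: loc.splits)

lemma step_R2_unchanged:
  assumes "step n q s s'" "pc s q \<noteq> WrR2 j"
  shows "R2 s' j = R2 s j"
  using assms by (auto simp: step_def Let_def split: loc.splits)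

lemma writer_step_stays_upto:
  assumes "step n q s s'" "writer_loc_upto j (pc s q)" "\<not> R2 s j"
  shows "writer_loc_upto j (pc s' q)"
  using assms by (cases "pc s q") (auto simp: step_def le_less Suc_le_eq)

lemma writers_confined_step:
  assumes "writers_confined j s" "step n q s s'" "pc s q \<noteq> WrR2 j"
  shows "writers_confined j s'"
proof -
  have "writer_loc_upto j (pc s' p)" if "p \<in> {0, 1}" for p
  proof (cases "p = q")
    case True
    with that assms show ?thesis
      using writer_step_stays_upto by (auto simp: writers_confined_def)
  next
    case False
    with that assms show ?thesis
      using step_pc_other by (auto simp: writers_confined_def)
  qed
  moreover have "\<not> R2 s' j"
    using assms step_R2_unchanged by (auto simp: writers_confined_def)
  ultimately show ?thesis
    by (simp add: writers_confined_def)
qed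

lemma execution_induct:
  assumes "execution n s" "P init"
    and "\<And>k p. P (s k) \<Longrightarrow> step n p (s k) (s (Suc k)) \<Longrightarrow> P (s (Suc k))"
  shows "P (s k)"
proof (induction k)
  case 0
  then show ?case using assms(1,2) by (simp add: execution_def)
next
  case (Suc k)
  from assms(1) have "s (Suc k) = s k \<or> (\<exists>p. step n p (s k) (s (Suc k)))"
    by (simp add: execution_def)
  with Suc assms(3) show ?case by auto
qed

theorem lemma1:
  fixes n :: nat and s :: "nat \<Rightarrow> config" and j :: nat
  assumes "n \<ge> 3"
    and "execution n s"
    and "\<forall>k p. p < n \<longrightarrow> pc (s k) p \<noteq> WrR2 j"
  shows "\<forall>k. \<forall>p \<in> {0, 1}. round_of (pc (s k) p) \<noteq> Some (Suc j)"
proof -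
  have confined: "writers_confined j (s k)" for k
  proof (rule execution_induct[OF assms(2)])
    show "writers_confined j init"
      by (simp add: init_def writers_confined_def)
  next
    fix k p
    assume "writers_confined j (s k)" and step: "step n p (s k) (s (Suc k))"
    moreover have "pc (s k) p \<noteq> WrR2 j"
      using assms(3) step_process_less[OF step] by blast
    ultimately show "writers_confined j (s (Suc k))"
      by (rule writers_confined_step)
  qed
  show ?thesis
  proof (intro allI ballI notI)
    fix k p :: nat
    assume "p \<in> {0, 1}" "round_of (pc (s k) p) = Some (Suc j)"
    moreover have "writer_loc_upto j (pc (s k) p)"
      using confined[of k] \<open>p \<in> {0, 1}\<close> by (auto simp: writers_confined_def)
    ultimately show False
      using writer_loc_upto_round_of by fastforce
  qed
qed

end
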